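(* Let $A,B\subseteq\mathbb{R}^n$ be finite nonempty sets (Euclidean metric), $\beta>0$ and $\delta>d^N_P(A,B)$. For all $r>0$ and $s>\delta$, $$\overline{\mathrm{Cr}}^\beta_{r,s}(A)\subseteq\overline{\mathrm{Cr}}^\beta_{r',s-\delta}(B),\qquad \overline{\mathrm{Cr}}^\beta_{r,s}(B)\subseteq\overline{\mathrm{Cr}}^\beta_{r',s-\delta}(A),$$ $$\overline{\mathrm{DCr}}^\beta_{r,s}(A)\subseteq\overline{\mathrm{DCr}}^\beta_{r'',s-\delta}(B),\qquad \overline{\mathrm{DCr}}^\beta_{r,s}(B)\subseteq\overline{\mathrm{DCr}}^\beta_{r'',s-\delta}(A),$$ where $r'=\max\{2(r+\beta\delta),(1+\beta^{-1})r+\delta\}$ and $r''=\max\{1,2\beta\}\big((1+\beta^{-1})r+\delta\big)$.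
   Context: $d$ Euclidean, $\bar B_d(x,r)=\{y:d(x,y)\le r\}$. For finite $A$, $k>0$, $x\in\mathbb{R}^n$, $\mathrm{core}^A_k(x)$ is the distance from $x$ to its $\lceil k\rceil$-th nearest neighbor in $A$ (each point of $A$ counted once, $x$ itself counting if $x\in A$); equivalently $\min\{r\ge0:|\bar B_d(x,r)\cap A|\ge k\}$, and $\infty$ if $k>|A|$. For $\beta>0$: $\Lambda^\beta_k(a,x)=\max\{\beta\,\mathrm{core}^A_k(a),d(a,x)\}$, $B^\beta_{r,k}(a)=\{x:\Lambda^\beta_k(a,x)\le r\}$, $\mathrm{Cr}^\beta_{r,k}(A)=\bigcup_{a\in A}B^\beta_{r,k}(a)$, $\mathrm{Vor}_A(a)=\{x:d(a,x)\le d(a',x)\ \forall a'\in A\}$, $\mathrm{DCr}^\beta_{r,k}(A)=\bigcup_{a\in A}\big(B^\beta_{r,k}(a)\cap\mathrm{Vor}_A(a)\big)$. Normalized versions: $\overline{\mathrm{Cr}}^\beta_{r,s}(A)=\mathrm{Cr}^\beta_{r,s|A|}(A)$ and $\overline{\mathrm{DCr}}^\beta_{r,s}(A)=\mathrm{DCr}^\beta_{r,s|A|}(A)$ for $r,s>0$ (similarly for $B$). For $S\subseteq\mathbb{R}^n$, $\delta\ge0$: $S^\delta=\bigcup_{x\in S}\bar B_d(x,\delta)$. Normalized Prohorov distance: $d^N_P(A,B)=\sup_{S\text{ closed}}\inf\{\delta\ge0:\tfrac{|S\cap A|}{|A|}\le\tfrac{|S^\delta\cap B|}{|B|}+\delta\text{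 and }\tfrac{|S\cap B|}{|B|}\le\tfrac{|S^\delta\cap A|}{|A|}+\delta\}$. *)

theory Defs
  imports "HOL-Analysis.Analysis" "HOL-Library.Extended_Real"
begin

definition core :: "(real^'n) set \<Rightarrow> real \<Rightarrow> real^'n \<Rightarrow> ereal" where
  "core A k x = (if real (card A) < k then \<infinity>
     else ereal (Inf {r. r \<ge> 0 \<and> k \<le> real (card (cball x r \<inter> A))}))"

definition Lam :: "real \<Rightarrow> (real^'n) set \<Rightarrow> real \<Rightarrow> real^'n \<Rightarrow> real^'n \<Rightarrow> ereal" where
  "Lam \<beta> A k a x = max (ereal \<beta> * core A k a) (ereal (dist a x))"

definition Bcr :: "real \<Rightarrow> (real^'n) set \<Rightarrow> real \<Rightarrow> real \<Rightarrow> real^'n \<Rightarrow> (real^'n) set" where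
  "Bcr \<beta> A r k a = {x. Lam \<beta> A k a x \<le> ereal r}"

definition Cr :: "real \<Rightarrow> (real^'n) set \<Rightarrow> real \<Rightarrow> real \<Rightarrow> (real^'n) set" where
  "Cr \<beta> A r k = (\<Union>a\<in>A. Bcr \<beta> A r k a)"

definition Vor :: "(real^'n) set \<Rightarrow> real^'n \<Rightarrow> (real^'n) set" where
  "Vor A a = {x. \<forall>a'\<in>A. dist a x \<le> dist a' x}"

definition DCr :: "real \<Rightarrow> (real^'n) set \<Rightarrow> real \<Rightarrow> real \<Rightarrow> (real^'n) set" where
  "DCr \<beta> A r k = (\<Union>a\<in>A. Bcr \<beta> A r k a \<inter> Vor A a)"

definition CrN :: "real \<Rightarrow> (real^'n) set \<Rightarrow> real \<Rightarrow> real \<Rightarrow> (real^'n) set" where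
  "CrN \<beta> A r s = Cr \<beta> A r (s * real (card A))"

definition DCrN :: "real \<Rightarrow> (real^'n) set \<Rightarrow> real \<Rightarrow> real \<Rightarrow> (real^'n) set" where
  "DCrN \<beta> A r s = DCr \<beta> A r (s * real (card A))"

definition thick :: "(real^'n) set \<Rightarrow> real \<Rightarrow> (real^'n) set" where
  "thick S \<delta> = (\<Union>x\<in>S. cball x \<delta>)"

definition dPN :: "(real^'n) set \<Rightarrow> (real^'n) set \<Rightarrow> real" where
  "dPN A B = (SUP S \<in> {S. closed S}.
     Inf {\<delta>. \<delta> \<ge> 0 \<and>
       real (card (S \<inter> A)) / real (card A) \<le> real (card (thick S \<delta> \<inter> B)) / real (card B) + \<delta> \<and>
       real (card (S \<inter> B)) / real (card B) \<le> real (card (thick S \<delta> \<inter> A)) / real (card A) + \<delta>})"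

end

theory Submission
  imports Defs
begin

text \<open>If \<open>\<delta>\<close> exceeds the Prohorov distance, the ball of radius \<open>c = core\<^sup>A\<^sub>k(a)\<close> around \<open>a\<close>,
  which carries mass at least \<open>s\<close> of \<open>A\<close>, thickens to the ball of radius \<open>c + \<delta>\<close>, which
  carries mass at least \<open>s - \<delta>\<close> of \<open>B\<close>. Since the core function is 1-Lipschitz, every
  point \<open>b\<close> then has \<open>core\<^sup>B\<^sub>k\<^sub>'(b) \<le> d(b,a) + c + \<delta>\<close>. For the Cech-type complex one
  takes for \<open>b\<close> a point of \<open>B\<close> in that ball; for the Delaunay-type complex one takes the point
  of \<open>B\<close> nearest to \<open>x\<close>, which lies at most as far from \<open>x\<close> as the former.\<close>

definition mass :: "(real^'n) set \<Rightarrow> (real^'n) set \<Rightarrow> real" where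
  "mass A S = real (card (S \<inter> A)) / real (card A)"

lemma mass_nonneg: "0 \<le> mass A S"
  by (simp add: mass_def)

lemma mass_le_1: "finite A \<Longrightarrow> mass A S \<le> 1"
  by (cases "card A = 0") (auto simp: mass_def divide_le_eq_1 card_mono)

lemma mass_mono: "finite A \<Longrightarrow> S \<subseteq> T \<Longrightarrow> mass A S \<le> mass A T"
  unfolding mass_def by (intro divide_right_mono) (auto intro!: card_mono)

lemma scaled_card_le_iff_le_mass:
  assumes "finite A" "A \<noteq> {}"
  shows "s * real (card A) \<le> real (card (S \<inter> A)) \<longleftrightarrow> s \<le> mass A S"
proof -
  have "0 < real (card A)" using assms by (simp add: card_gt_0_iff)
  then show ?thesis by (simp add: mass_def pos_le_divide_eq)
qed

lemma mass_pos_imp_ex: "0 < mass A S \<Longrightarrow> \<exists>a\<in>A. a \<in> S"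
  by (cases "S \<inter> A = {}") (auto simp: mass_def)

definition prohorov_admissible ::
  "(real^'n) set \<Rightarrow> (real^'n) set \<Rightarrow> (real^'n) set \<Rightarrow> real \<Rightarrow> bool" where
  "prohorov_admissible A B S d \<longleftrightarrow>
     d \<ge> 0 \<and> mass A S \<le> mass B (thick S d) + d \<and> mass B S \<le> mass A (thick S d) + d"

lemma dPN_eq_SUP_admissible:
  "dPN A B = (SUP S \<in> {S. closed S}. Inf {d. prohorov_admissible A B S d})"
  by (simp add: dPN_def prohorov_admissible_def mass_def)

lemma thick_mono: "d \<le> e \<Longrightarrow> thick S d \<subseteq> thick S e"
  unfolding thick_def by auto

lemma prohorov_admissible_mono:
  assumes "finite A" "finite B" "prohorov_admissible A B S d" "d \<le> e"
  shows "prohorov_admissible A B S e"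
  using assms mass_mono[OF assms(1) thick_mono] mass_mono[OF assms(2) thick_mono]
  unfolding prohorov_admissible_def by (smt (verit))

lemma prohorov_admissible_1:
  "finite A \<Longrightarrow> finite B \<Longrightarrow> prohorov_admissible A B S 1"
  using mass_le_1[of A S] mass_le_1[of B S] mass_nonneg[of A] mass_nonneg[of B]
  unfolding prohorov_admissible_def by (smt (verit))

lemma dPN_less_imp_admissible:
  assumes fin: "finite A" "finite B" and "dPN A B < \<delta>" and "closed S"
  shows "prohorov_admissible A B S \<delta>"
proof -
  let ?I = "\<lambda>S. Inf {d. prohorov_admissible A B S d}"
  have bdd_below: "bdd_below {d. prohorov_admissible A B S d}" for S
    by (rule bdd_belowI[of _ 0]) (simp add: prohorov_admissible_def)
  have "?I S \<le> 1" for S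
    using prohorov_admissible_1[OF fin] bdd_below by (intro cInf_lower) auto
  then have "bdd_above (?I ` {S. closed S})"
    by (intro bdd_aboveI[of _ 1]) auto
  then have "?I S \<le> dPN A B"
    unfolding dPN_eq_SUP_admissible using \<open>closed S\<close> by (intro cSUP_upper) auto
  with \<open>dPN A B < \<delta>\<close> have "?I S < \<delta>" by linarith
  moreover have "{d. prohorov_admissible A B S d} \<noteq> {}"
    using prohorov_admissible_1[OF fin] by blast
  ultimately obtain d where "prohorov_admissible A B S d" "d < \<delta>"
    using cInf_less_iff[OF _ bdd_below] by blast
  then show ?thesis using prohorov_admissible_mono[OF fin] by auto
qed

lemma core_eq_Inf:
  "k \<le> real (card A) \<Longrightarrow> core A k a = ereal (Inf {r. r \<ge> 0 \<and> k \<le> real (card (cball a r \<inter> A))})"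
  by (simp add: core_def)

lemma core_finite_imp_le_card: "core A k a \<noteq> \<infinity> \<Longrightarrow> k \<le> real (card A)"
  by (auto simp: core_def split: if_splits)

lemma core_attained:
  fixes A :: "(real^'n) set"
  assumes fin: "finite A" and kA: "k \<le> real (card A)"
  obtains c where "core A k a = ereal c" "c \<ge> 0" "k \<le> real (card (cball a c \<inter> A))"
proof -
  define T where "T = {r. r \<ge> 0 \<and> k \<le> real (card (cball a r \<inter> A))}"
  obtain R where "\<forall>y\<in>A. dist a y \<le> R"
    using finite_imp_bounded[OF fin] bounded_any_center by blast
  then have "A \<subseteq> cball a (max R 0)" by force
  then have "max R 0 \<in> T" using kA by (simp add: T_def Int_absorb1)
  then have ne: "T \<noteq> {}" by blast
  have bdd: "bdd_below T" unfolding T_def by (rule bdd_belowI[of _ 0]) auto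
  have "Inf T \<ge> 0" using ne by (intro cInf_greatest) (auto simp: T_def)
  moreover have "k \<le> real (card (cball a (Inf T) \<inter> A))"
  proof (cases "A \<subseteq> cball a (Inf T)")
    case True
    then show ?thesis using kA by (simp add: Int_absorb1)
  next
    case False
    \<comment> \<open>no point of \<open>A\<close> has distance in \<open>(Inf T, Inf T + e)\<close> from \<open>a\<close>, so some radius
      in \<open>T\<close> below \<open>Inf T + e\<close> sees the same points as \<open>Inf T\<close>\<close>
    define e where "e = Min ((\<lambda>y. dist a y - Inf T) ` (A - cball a (Inf T)))"
    have fin_gaps: "finite ((\<lambda>y. dist a y - Inf T) ` (A - cball a (Inf T)))" using fin by auto
    have "e > 0" unfolding e_def using fin_gaps False by (simp add: Min_gr_iff)
    then obtain \<rho> where \<rho>: "\<rho> \<in> T" "\<rho> < Inf T + e"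
      using cInf_less_iff[OF ne bdd, of "Inf T + e"] by auto
    have "cball a \<rho> \<inter> A \<subseteq> cball a (Inf T) \<inter> A"
    proof
      fix y assume y: "y \<in> cball a \<rho> \<inter> A"
      show "y \<in> cball a (Inf T) \<inter> A"
      proof (rule ccontr)
        assume "y \<notin> cball a (Inf T) \<inter> A"
        then have "e \<le> dist a y - Inf T" unfolding e_def using fin_gaps y by (intro Min_le) auto
        then show False using y \<rho> by auto
      qed
    qed
    then have "card (cball a \<rho> \<inter> A) \<le> card (cball a (Inf T) \<inter> A)" using fin by (simp add: card_mono)
    then show ?thesis using \<rho> by (auto simp: T_def)
  qed
  ultimately show ?thesis using that core_eq_Inf[OF kA] unfolding T_def by blast
qed

lemma core_le_radius:
  fixes A :: "(real^'n) set"
  assumes "finite A" "\<rho> \<ge> 0" "k \<le> real (card (cball b \<rho> \<inter> A))"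
  obtains c where "core A k b = ereal c" "c \<le> \<rho>"
proof -
  have "k \<le> real (card A)"
    using assms card_mono[OF \<open>finite A\<close>, of "cball b \<rho> \<inter> A"] by auto
  moreover have "Inf {r. r \<ge> 0 \<and> k \<le> real (card (cball b r \<inter> A))} \<le> \<rho>"
    using assms by (intro cInf_lower bdd_belowI[of _ 0]) auto
  ultimately show ?thesis using that core_eq_Inf by blast
qed

lemma core_le_dist_add:
  fixes A :: "(real^'n) set"
  assumes "finite A" "\<rho> \<ge> 0" "k \<le> real (card (cball a \<rho> \<inter> A))"
  obtains c where "core A k b = ereal c" "c \<le> dist b a + \<rho>"
proof (rule core_le_radius[OF \<open>finite A\<close>])
  have "cball a \<rho> \<subseteq> cball b (dist b a + \<rho>)"
    by (auto simp: dist_commute) (smt (verit) dist_triangle)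
  then have "card (cball a \<rho> \<inter> A) \<le> card (cball b (dist b a + \<rho>) \<inter> A)"
    using \<open>finite A\<close> by (intro card_mono) auto
  then show "k \<le> real (card (cball b (dist b a + \<rho>) \<inter> A))"
    using assms(3) by linarith
qed (use assms that in auto)

lemma Lam_le_ereal_iff:
  assumes "\<beta> > 0"
  shows "Lam \<beta> A k a x \<le> ereal r \<longleftrightarrow> (\<exists>c. core A k a = ereal c \<and> \<beta> * c \<le> r) \<and> dist a x \<le> r"
  using assms by (auto simp: Lam_def core_def)

lemma thick_cball: "thick (cball a c) d \<subseteq> cball a (c + d)"
  unfolding thick_def by (auto simp: dist_commute) (smt (verit) dist_triangle)

lemma Lam_le_imp_mass_cball:
  fixes A B :: "(real^'n) set"
  assumes "finite A" "A \<noteq> {}" "finite B" "\<beta> > 0"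
    and dom: "\<forall>S. closed S \<longrightarrow> mass A S \<le> mass B (thick S \<delta>) + \<delta>"
    and La: "Lam \<beta> A (s * real (card A)) a x \<le> ereal r"
  obtains c where "\<beta> * c \<le> r" "dist a x \<le> r" "s - \<delta> \<le> mass B (cball a (c + \<delta>))"
proof -
  obtain c where c: "core A (s * real (card A)) a = ereal c" "\<beta> * c \<le> r" and "dist a x \<le> r"
    using La Lam_le_ereal_iff[OF \<open>\<beta> > 0\<close>] by blast
  have "s * real (card A) \<le> real (card A)"
    using c(1) core_finite_imp_le_card[of A _ a] by simp
  then obtain c' where "core A (s * real (card A)) a = ereal c'"
    "s * real (card A) \<le> real (card (cball a c' \<inter> A))"
    using core_attained[OF \<open>finite A\<close>] by blast
  with c(1) have "s \<le> mass A (cball a c)"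
    using scaled_card_le_iff_le_mass[OF \<open>finite A\<close> \<open>A \<noteq> {}\<close>] by auto
  also have "mass A (cball a c) \<le> mass B (thick (cball a c) \<delta>) + \<delta>"
    using dom by auto
  also have "\<dots> \<le> mass B (cball a (c + \<delta>)) + \<delta>"
    using mass_mono[OF \<open>finite B\<close> thick_cball] by simp
  finally show ?thesis using that c(2) \<open>dist a x \<le> r\<close> by auto
qed

lemma Lam_le_imp_core_transfer:
  fixes A B :: "(real^'n) set"
  assumes "finite A" "A \<noteq> {}" "finite B" "B \<noteq> {}" "\<beta> > 0" "\<delta> < s"
    and dom: "\<forall>S. closed S \<longrightarrow> mass A S \<le> mass B (thick S \<delta>) + \<delta>"
    and La: "Lam \<beta> A (s * real (card A)) a x \<le> ereal r"
  obtains c b where "\<beta> * c \<le> r" "dist a x \<le> r" "b \<in> B" "dist a b \<le> c + \<delta>"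
    and "\<forall>b'. \<exists>c'. core B ((s - \<delta>) * real (card B)) b' = ereal c' \<and> c' \<le> dist b' a + (c + \<delta>)"
proof -
  obtain c where c: "\<beta> * c \<le> r" "dist a x \<le> r" and mass: "s - \<delta> \<le> mass B (cball a (c + \<delta>))"
    using Lam_le_imp_mass_cball[OF \<open>finite A\<close> \<open>A \<noteq> {}\<close> \<open>finite B\<close> \<open>\<beta> > 0\<close> dom La] by blast
  then obtain b where b: "b \<in> B" "dist a b \<le> c + \<delta>"
    using mass_pos_imp_ex[of B "cball a (c + \<delta>)"] \<open>\<delta> < s\<close> by force
  have "(s - \<delta>) * real (card B) \<le> real (card (cball a (c + \<delta>) \<inter> B))"
    using mass scaled_card_le_iff_le_mass[OF \<open>finite B\<close> \<open>B \<noteq> {}\<close>] by blast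
  moreover have "c + \<delta> \<ge> 0" using b(2) zero_le_dist[of a b] by linarith
  ultimately have core: "\<exists>c'. core B ((s - \<delta>) * real (card B)) b' = ereal c' \<and> c' \<le> dist b' a + (c + \<delta>)" for b'
    using core_le_dist_add[OF \<open>finite B\<close>] by metis
  then show ?thesis by (intro that[OF c b] allI)
qed

lemma CrN_subset_CrN:
  fixes A B :: "(real^'n) set"
  assumes "finite A" "A \<noteq> {}" "finite B" "B \<noteq> {}" "\<beta> > 0" "\<delta> < s"
    and dom: "\<forall>S. closed S \<longrightarrow> mass A S \<le> mass B (thick S \<delta>) + \<delta>"
  shows "CrN \<beta> A r s \<subseteq> CrN \<beta> B (max (2 * (r + \<beta> * \<delta>)) ((1 + 1 / \<beta>) * r + \<delta>)) (s - \<delta>)"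
proof
  fix x assume "x \<in> CrN \<beta> A r s"
  then obtain a where La: "Lam \<beta> A (s * real (card A)) a x \<le> ereal r"
    by (auto simp: CrN_def Cr_def Bcr_def)
  obtain c b where c: "\<beta> * c \<le> r" "dist a x \<le> r" and b: "b \<in> B" "dist a b \<le> c + \<delta>"
    and core: "\<forall>b'. \<exists>c'. core B ((s - \<delta>) * real (card B)) b' = ereal c' \<and> c' \<le> dist b' a + (c + \<delta>)"
    using Lam_le_imp_core_transfer[OF assms La] by blast
  from core obtain c' where c': "core B ((s - \<delta>) * real (card B)) b = ereal c'" "c' \<le> dist b a + (c + \<delta>)"
    by blast
  with b(2) have "c' \<le> 2 * (c + \<delta>)" by (simp add: dist_commute)
  then have "\<beta> * c' \<le> \<beta> * (2 * (c + \<delta>))" using \<open>\<beta> > 0\<close> by simp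
  also have "\<dots> \<le> 2 * (r + \<beta> * \<delta>)" using c(1) by (simp add: algebra_simps)
  finally have "\<beta> * c' \<le> 2 * (r + \<beta> * \<delta>)" .
  moreover have "c \<le> r / \<beta>" using c(1) \<open>\<beta> > 0\<close> by (simp add: pos_le_divide_eq mult.commute)
  then have "dist b x \<le> (1 + 1 / \<beta>) * r + \<delta>"
    using b(2) c(2) dist_triangle[of b x a] by (simp add: dist_commute algebra_simps)
  ultimately have "Lam \<beta> B ((s - \<delta>) * real (card B)) b x \<le> ereal (max (2 * (r + \<beta> * \<delta>)) ((1 + 1 / \<beta>) * r + \<delta>))"
    unfolding Lam_le_ereal_iff[OF \<open>\<beta> > 0\<close>] using c'(1) by (auto intro: max.coboundedI1 max.coboundedI2)
  with b(1) show "x \<in> CrN \<beta> B (max (2 * (r + \<beta> * \<delta>)) ((1 + 1 / \<beta>) * r + \<delta>)) (s - \<delta>)"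
    by (auto simp: CrN_def Cr_def Bcr_def)
qed

lemma DCrN_subset_DCrN:
  fixes A B :: "(real^'n) set"
  assumes "finite A" "A \<noteq> {}" "finite B" "B \<noteq> {}" "\<beta> > 0" "\<delta> < s"
    and dom: "\<forall>S. closed S \<longrightarrow> mass A S \<le> mass B (thick S \<delta>) + \<delta>"
  shows "DCrN \<beta> A r s \<subseteq> DCrN \<beta> B (max 1 (2 * \<beta>) * ((1 + 1 / \<beta>) * r + \<delta>)) (s - \<delta>)"
proof
  define R where "R = (1 + 1 / \<beta>) * r + \<delta>"
  fix x assume "x \<in> DCrN \<beta> A r s"
  then obtain a where La: "Lam \<beta> A (s * real (card A)) a x \<le> ereal r"
    by (auto simp: DCrN_def DCr_def Bcr_def)
  obtain c b where c: "\<beta> * c \<le> r" "dist a x \<le> r" and b: "b \<in> B" "dist a b \<le> c + \<delta>"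
    and core: "\<forall>b'. \<exists>c'. core B ((s - \<delta>) * real (card B)) b' = ereal c' \<and> c' \<le> dist b' a + (c + \<delta>)"
    using Lam_le_imp_core_transfer[OF assms La] by blast
  obtain b\<^sub>x where b\<^sub>x: "b\<^sub>x \<in> B" "\<And>y. y \<in> B \<Longrightarrow> dist x b\<^sub>x \<le> dist x y"
    using distance_attains_inf[where a = x, OF finite_imp_closed[OF \<open>finite B\<close>] \<open>B \<noteq> {}\<close>] by blast
  have "c \<le> r / \<beta>" using c(1) \<open>\<beta> > 0\<close> by (simp add: pos_le_divide_eq mult.commute)
  then have cR: "c + \<delta> + r \<le> R" by (simp add: R_def algebra_simps)
  have "dist b\<^sub>x x \<le> dist b x" using b\<^sub>x b(1) by (simp add: dist_commute)
  then have dist_R: "dist b\<^sub>x x \<le> R"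
    using b(2) c(2) cR dist_triangle[of b x a] dist_commute[of b a] by linarith
  from core obtain c' where c': "core B ((s - \<delta>) * real (card B)) b\<^sub>x = ereal c'" "c' \<le> dist b\<^sub>x a + (c + \<delta>)"
    by blast
  have "c' \<le> 2 * R"
    using c'(2) dist_R cR c(2) dist_triangle[of b\<^sub>x a x] dist_commute[of x a] by linarith
  have "R \<ge> 0" using dist_R zero_le_dist[of b\<^sub>x x] by linarith
  have "\<beta> * c' \<le> 2 * \<beta> * R" using \<open>c' \<le> 2 * R\<close> \<open>\<beta> > 0\<close> by simp
  also have "\<dots> \<le> max 1 (2 * \<beta>) * R" using mult_right_mono[OF max.cobounded2 \<open>R \<ge> 0\<close>] .
  finally have "\<beta> * c' \<le> max 1 (2 * \<beta>) * R" .
  moreover have "dist b\<^sub>x x \<le> max 1 (2 * \<beta>) * R"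
    using dist_R mult_right_mono[OF max.cobounded1 \<open>R \<ge> 0\<close>, of 1 "2 * \<beta>"] by linarith
  ultimately have "x \<in> Bcr \<beta> B (max 1 (2 * \<beta>) * R) ((s - \<delta>) * real (card B)) b\<^sub>x"
    unfolding Bcr_def Lam_le_ereal_iff[OF \<open>\<beta> > 0\<close>] using c'(1) by auto
  moreover have "x \<in> Vor B b\<^sub>x" using b\<^sub>x(2) by (simp add: Vor_def dist_commute)
  ultimately show "x \<in> DCrN \<beta> B (max 1 (2 * \<beta>) * ((1 + 1 / \<beta>) * r + \<delta>)) (s - \<delta>)"
    unfolding DCrN_def DCr_def R_def using b\<^sub>x(1) by blast
qed

theorem mainTheorem9:
  fixes A B :: "(real^'n) set" and \<beta> \<delta> r s :: real
  assumes "finite A" "A \<noteq> {}" "finite B" "B \<noteq> {}"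
    and "\<beta> > 0" and "\<delta> > dPN A B"
    and "r > 0" and "s > \<delta>"
  shows "CrN \<beta> A r s \<subseteq> CrN \<beta> B (max (2 * (r + \<beta> * \<delta>)) ((1 + 1 / \<beta>) * r + \<delta>)) (s - \<delta>)
       \<and> CrN \<beta> B r s \<subseteq> CrN \<beta> A (max (2 * (r + \<beta> * \<delta>)) ((1 + 1 / \<beta>) * r + \<delta>)) (s - \<delta>)
       \<and> DCrN \<beta> A r s \<subseteq> DCrN \<beta> B (max 1 (2 * \<beta>) * ((1 + 1 / \<beta>) * r + \<delta>)) (s - \<delta>)
       \<and> DCrN \<beta> B r s \<subseteq> DCrN \<beta> A (max 1 (2 * \<beta>) * ((1 + 1 / \<beta>) * r + \<delta>)) (s - \<delta>)"
proof -
  have "prohorov_admissible A B S \<delta>" if "closed S" for S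
    using dPN_less_imp_admissible[OF \<open>finite A\<close> \<open>finite B\<close> \<open>\<delta> > dPN A B\<close> that] .
  then have dom_AB: "\<forall>S. closed S \<longrightarrow> mass A S \<le> mass B (thick S \<delta>) + \<delta>"
    and dom_BA: "\<forall>S. closed S \<longrightarrow> mass B S \<le> mass A (thick S \<delta>) + \<delta>"
    by (auto simp: prohorov_admissible_def)
  note AB = assms(1-5,8) and BA = assms(3,4,1,2,5,8)
  show ?thesis
    using CrN_subset_CrN[OF AB dom_AB] CrN_subset_CrN[OF BA dom_BA]
      DCrN_subset_DCrN[OF AB dom_AB] DCrN_subset_DCrN[OF BA dom_BA] by blast
qed

end
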